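(* Let $n,p,k\ge 1$, let $X\in\mathbb{R}^{n\times p}$, $\omega\in\mathbb{R}^n$, and let $\theta_1^*,\dots,\theta_k^*\in\mathbb{R}^p$, with observation $y = X\sum_{i=1}^k\theta_i^* + \omega$. Let $R_1,\dots,R_k$ be norms on $\mathbb{R}^p$ and let $(\hat\theta_1,\dots,\hat\theta_k)$ be a solution of $$\min_{\theta_1,\dots,\theta_k}\Big\|y - X\sum_{i=1}^k\theta_i\Big\|_2^2\quad\text{s.t.}\quad R_i(\theta_i)\le R_i(\theta_i^* ),\ i=1,\dots,k.$$ Set $\Delta_i=\hat\theta_i-\theta_i^*$. Assume the restricted eigenvalue condition holds with constant $\kappa>0$: for all $\Delta_i'\in\mathcal{C}_i$, $i=1,\dots,k$, $$\frac{1}{\sqrt n}\Big\|X\sum_{i=1}^k\Delta_i'\Big\|_2\ \ge\ \kappa\sum_{i=1}^k\|\Delta_i'\|_2 .$$ Let $\gamma>0$. If $\kappa^2>\gamma$, then $\sum_{i=1}^k\|\Delta_i\|_2\le 2 s_n(\gamma)$.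
   Context: For each $i$, the error cone is $\mathcal{C}_i=\operatorname{cone}\{\Delta\in\mathbb{R}^p: R_i(\theta_i^*+\Delta)\le R_i(\theta_i^* )\}$, where $\operatorname{cone}(E)$ denotes the smallest closed cone containing $E$. Let $\mathcal{H}=\{\sum_{i=1}^k\Delta_i' : \Delta_i'\in\mathcal{C}_i,\ \sum_{i=1}^k\|\Delta_i'\|_2=1\}$ and, for $s>0$, $s\mathcal{H}=\{su:u\in\mathcal{H}\}$. The noise–design interaction is $$s_n(\gamma)=\inf\Big\{s>0:\ \sup_{u\in s\mathcal{H}}\frac{1}{\sqrt n}\,\omega^T X u\le \gamma s^2\sqrt n\Big\}.$$ *)

theory Defs
  imports "HOL-Analysis.Analysis"
begin

definition is_norm :: "('a::real_vector \<Rightarrow> real) \<Rightarrow> bool" where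
  "is_norm R \<longleftrightarrow> (\<forall>x. 0 \<le> R x) \<and> (\<forall>x. R x = 0 \<longleftrightarrow> x = 0)
     \<and> (\<forall>c x. R (c *\<^sub>R x) = \<bar>c\<bar> * R x) \<and> (\<forall>x y. R (x + y) \<le> R x + R y)"

definition closed_cone_hull :: "'a::{real_vector,topological_space} set \<Rightarrow> 'a set" where
  "closed_cone_hull E = \<Inter>{C. cone C \<and> closed C \<and> E \<subseteq> C}"

definition error_cone :: "('a::real_normed_vector \<Rightarrow> real) \<Rightarrow> 'a \<Rightarrow> 'a set" where
  "error_cone R theta = closed_cone_hull {d. R (theta + d) \<le> R theta}"

definition H_set :: "nat \<Rightarrow> (nat \<Rightarrow> 'a::real_normed_vector \<Rightarrow> real) \<Rightarrow> (nat \<Rightarrow> 'a) \<Rightarrow> 'a set" where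
  "H_set k R thetas = {(\<Sum>i=1..k. D i) | D. (\<forall>i\<in>{1..k}. D i \<in> error_cone (R i) (thetas i))
        \<and> (\<Sum>i=1..k. norm (D i)) = 1}"

text \<open>Noise-design interaction s_n(gamma), with n = CARD('n).
  The condition sup_{u in sH} f(u) <= c is written as: for all u in sH, f(u) <= c.\<close>
definition noise_design :: "real ^'p ^'n \<Rightarrow> real ^'n \<Rightarrow> nat \<Rightarrow> (nat \<Rightarrow> real^'p \<Rightarrow> real)
     \<Rightarrow> (nat \<Rightarrow> real^'p) \<Rightarrow> real \<Rightarrow> real" where
  "noise_design X w k R thetas gamma =
     Inf {s. s > 0 \<and> (\<forall>u \<in> (\<lambda>v. s *\<^sub>R v) ` H_set k R thetas.
        (1 / sqrt (real CARD('n))) * (w \<bullet> (X *v u)) \<le> gamma * s^2 * sqrt (real CARD('n)))}"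

end

theory Submission
  imports Defs
begin

text \<open>The estimator is compared with the truth itself, which is feasible: this gives the basic
  inequality \<open>\<parallel>X\<Delta>\<parallel>\<^sup>2 \<le> 2 \<omega>\<^sup>T X\<Delta>\<close> for \<open>\<Delta> = \<Sum>\<^sub>i \<Delta>\<^sub>i\<close>, each \<open>\<Delta>\<^sub>i\<close> lying in its error cone.
  Writing \<open>t = \<Sum>\<^sub>i \<parallel>\<Delta>\<^sub>i\<parallel>\<close>, the restricted eigenvalue condition bounds the left side below by
  \<open>\<kappa>\<^sup>2 t\<^sup>2 n\<close>, while \<open>\<Delta>/t \<in> H\<close> and the definition of \<open>s\<^sub>n(\<gamma>)\<close> bound the right side above by
  \<open>2 \<gamma> s t n\<close> for every admissible scale \<open>s\<close>. Since \<open>\<gamma> < \<kappa>\<^sup>2\<close> this forces \<open>t \<le> 2 s\<close>.\<close>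

lemma closed_cone_hull_superset: "x \<in> E \<Longrightarrow> x \<in> closed_cone_hull E"
  unfolding closed_cone_hull_def by blast

lemma closed_cone_hull_scaleR:
  "x \<in> closed_cone_hull E \<Longrightarrow> (c::real) \<ge> 0 \<Longrightarrow> c *\<^sub>R x \<in> closed_cone_hull E"
  unfolding closed_cone_hull_def cone_def by blast

lemma diff_in_error_cone: "R x \<le> R theta \<Longrightarrow> x - theta \<in> error_cone R theta"
  unfolding error_cone_def by (intro closed_cone_hull_superset) simp

lemma norm_le_one_of_H_set:
  assumes "u \<in> H_set k R thetas"
  shows "norm u \<le> 1"
proof -
  obtain D where "u = (\<Sum>i=1..k. D i)" "(\<Sum>i=1..k. norm (D i)) = 1"
    using assms unfolding H_set_def by blast
  then show ?thesis using norm_sum[of D "{1..k}"] by simp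
qed

lemma linear_sum_error_cone_le:
  assumes f: "linear f"
    and bound: "\<forall>u\<in>H_set k R thetas. f u \<le> c"
    and cone: "\<forall>i\<in>{1..k}. D i \<in> error_cone (R i) (thetas i)"
  shows "f (\<Sum>i=1..k. D i) \<le> c * (\<Sum>i=1..k. norm (D i))"
proof (cases "(\<Sum>i=1..k. norm (D i)) = 0")
  case True
  then have "(\<Sum>i=1..k. D i) = 0" by (simp add: sum_nonneg_eq_0_iff)
  then show ?thesis using True linear_0[OF f] by simp
next
  case False
  define t where "t = (\<Sum>i=1..k. norm (D i))"
  have t: "t > 0" using False unfolding t_def by (simp add: order_less_le sum_nonneg)
  define D' where "D' i = (1 / t) *\<^sub>R D i" for i
  have "(\<Sum>i=1..k. D' i) \<in> H_set k R thetas"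
  proof -
    have "\<forall>i\<in>{1..k}. D' i \<in> error_cone (R i) (thetas i)"
      using cone t unfolding D'_def error_cone_def by (auto intro: closed_cone_hull_scaleR)
    moreover have "(\<Sum>i=1..k. norm (D' i)) = 1"
      using t unfolding D'_def t_def by (simp add: sum_divide_distrib[symmetric])
    ultimately show ?thesis unfolding H_set_def by blast
  qed
  moreover have "(\<Sum>i=1..k. D' i) = (1 / t) *\<^sub>R (\<Sum>i=1..k. D i)"
    unfolding D'_def by (simp add: scaleR_sum_right)
  ultimately have "f ((1 / t) *\<^sub>R (\<Sum>i=1..k. D i)) \<le> c"
    using bound by metis
  then have "(1 / t) * f (\<Sum>i=1..k. D i) \<le> c"
    by (simp add: linear_scale[OF f])
  then show ?thesis using t unfolding t_def[symmetric] by (simp add: field_simps)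
qed

definition noise_design_scales ::
    "real ^'p ^'n \<Rightarrow> real ^'n \<Rightarrow> nat \<Rightarrow> (nat \<Rightarrow> real^'p \<Rightarrow> real) \<Rightarrow> (nat \<Rightarrow> real^'p) \<Rightarrow> real
      \<Rightarrow> real set" where
  "noise_design_scales X w k R thetas gamma =
     {s. s > 0 \<and> (\<forall>u\<in>H_set k R thetas. w \<bullet> (X *v u) \<le> gamma * s * real CARD('n))}"

lemma noise_design_eq_Inf_scales:
  fixes X :: "real ^'p ^'n"
  shows "noise_design X w k R thetas gamma = Inf (noise_design_scales X w k R thetas gamma)"
proof -
  define N where "N = real CARD('n)"
  have "N > 0" unfolding N_def by simp
  then have N: "sqrt N > 0" "sqrt N * sqrt N = N" by auto
  have "(1 / sqrt N) * (w \<bullet> (X *v (s *\<^sub>R u))) \<le> gamma * s\<^sup>2 * sqrt N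
          \<longleftrightarrow> w \<bullet> (X *v u) \<le> gamma * s * N" if "s > 0" for s u
  proof -
    have "(1 / sqrt N) * (w \<bullet> (X *v (s *\<^sub>R u))) \<le> gamma * s\<^sup>2 * sqrt N
          \<longleftrightarrow> s * (w \<bullet> (X *v u)) \<le> s * (gamma * s * N)"
      using N by (simp add: matrix_vector_mult_scaleR field_simps power2_eq_square)
    also have "\<dots> \<longleftrightarrow> w \<bullet> (X *v u) \<le> gamma * s * N" using that by (simp add: mult.assoc)
    finally show ?thesis .
  qed
  then show ?thesis
    unfolding noise_design_def noise_design_scales_def N_def[symmetric]
    by (intro arg_cong[where f = Inf]) auto
qed

lemma noise_design_scales_nonempty:
  fixes X :: "real ^'p ^'n"
  assumes "gamma > 0"
  shows "noise_design_scales X w k R thetas gamma \<noteq> {}"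
proof -
  define N where "N = real CARD('n)"
  have N: "N > 0" unfolding N_def by simp
  obtain B where B: "\<And>x. norm (X *v x) \<le> norm x * B" "B > 0"
    using bounded_linear.pos_bounded[OF matrix_vector_mul_bounded_linear[of X]] by blast
  have "w \<bullet> (X *v u) \<le> norm w * B" if "u \<in> H_set k R thetas" for u
  proof -
    have "w \<bullet> (X *v u) \<le> norm w * norm (X *v u)" by (rule norm_cauchy_schwarz)
    also have "\<dots> \<le> norm w * (norm u * B)" by (rule mult_left_mono[OF B(1)]) simp
    also have "\<dots> \<le> norm w * B"
      using norm_le_one_of_H_set[OF that] B(2) by (simp add: mult_left_mono mult_right_le_one_le)
    finally show ?thesis .
  qed
  moreover have "gamma * ((norm w * B + 1) / (gamma * N)) * N = norm w * B + 1"
    using assms N by simp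
  moreover have "(norm w * B + 1) / (gamma * N) > 0"
    using assms N B(2) by (simp add: add_nonneg_pos)
  ultimately have "(norm w * B + 1) / (gamma * N) \<in> noise_design_scales X w k R thetas gamma"
    unfolding noise_design_scales_def N_def by force
  then show ?thesis by blast
qed

lemma basic_inequality:
  fixes w v :: "'a::real_inner"
  assumes "(norm (w - v))\<^sup>2 \<le> (norm w)\<^sup>2"
  shows "(norm v)\<^sup>2 \<le> 2 * (w \<bullet> v)"
  using assms by (simp add: power2_norm_eq_inner inner_diff inner_commute)

lemma sum_norm_le_twice_scale:
  fixes X :: "real ^'p ^'n" and w :: "real ^'n" and k :: nat and D :: "nat \<Rightarrow> real ^'p"
  defines "t \<equiv> \<Sum>i=1..k. norm (D i)" and "v \<equiv> X *v (\<Sum>i=1..k. D i)"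
  assumes cone: "\<forall>i\<in>{1..k}. D i \<in> error_cone (R i) (thetas i)"
    and basic: "(norm v)\<^sup>2 \<le> 2 * (w \<bullet> v)"
    and RE: "(1 / sqrt (real CARD('n))) * norm v \<ge> kappa * t"
    and kappa: "kappa > 0" and kg: "kappa\<^sup>2 > gamma"
    and s: "s \<in> noise_design_scales X w k R thetas gamma"
  shows "t \<le> 2 * s"
proof -
  define N where "N = real CARD('n)"
  have "N > 0" unfolding N_def by simp
  then have N: "N > 0" "sqrt N * sqrt N = N" by auto
  have s_pos: "s > 0" and s_bound: "\<forall>u\<in>H_set k R thetas. w \<bullet> (X *v u) \<le> gamma * s * N"
    using s unfolding noise_design_scales_def N_def by auto
  have t: "t \<ge> 0" unfolding t_def by (simp add: sum_nonneg)
  have "linear (\<lambda>u. w \<bullet> (X *v u))"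
    by (simp add: linear_iff inner_add_right matrix_vector_right_distrib matrix_vector_mult_scaleR)
  then have upper: "w \<bullet> v \<le> gamma * s * N * t"
    using linear_sum_error_cone_le[OF _ s_bound cone] unfolding v_def t_def by blast
  have "kappa * t * sqrt N \<le> norm v"
    using RE N by (simp add: N_def field_simps)
  then have "(kappa * t * sqrt N)\<^sup>2 \<le> (norm v)\<^sup>2"
    using kappa t N by (intro power_mono) auto
  moreover have "(kappa * t * sqrt N)\<^sup>2 = kappa\<^sup>2 * t\<^sup>2 * N"
    using N by (simp add: power_mult_distrib)
  ultimately have "kappa\<^sup>2 * t\<^sup>2 * N \<le> 2 * gamma * s * N * t"
    using basic upper by linarith
  then have "t * (kappa\<^sup>2 * t) \<le> t * (2 * gamma * s)"
    using N by (simp add: power2_eq_square mult_ac)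
  moreover have "2 * gamma * s < 2 * kappa\<^sup>2 * s" using kg s_pos by simp
  ultimately have "t = 0 \<or> kappa\<^sup>2 * t < kappa\<^sup>2 * (2 * s)"
    using t by (auto simp: mult_le_cancel_left)
  then show ?thesis using s_pos kappa by (auto simp: mult_less_cancel_left)
qed

theorem theorem1:
  fixes X :: "real ^'p ^'n" and w y :: "real ^'n" and k :: nat
    and thetas thetahat :: "nat \<Rightarrow> real ^'p" and R :: "nat \<Rightarrow> real ^'p \<Rightarrow> real"
    and kappa gamma :: real
  assumes k: "k \<ge> 1"
    and y: "y = X *v (\<Sum>i=1..k. thetas i) + w"
    and norms: "\<forall>i\<in>{1..k}. is_norm (R i)"
    and feas: "\<forall>i\<in>{1..k}. R i (thetahat i) \<le> R i (thetas i)"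
    and opt: "\<forall>theta. (\<forall>i\<in>{1..k}. R i (theta i) \<le> R i (thetas i)) \<longrightarrow>
               (norm (y - X *v (\<Sum>i=1..k. thetahat i)))^2 \<le> (norm (y - X *v (\<Sum>i=1..k. theta i)))^2"
    and kappa: "kappa > 0"
    and RE: "\<forall>D. (\<forall>i\<in>{1..k}. D i \<in> error_cone (R i) (thetas i)) \<longrightarrow>
               (1 / sqrt (real CARD('n))) * norm (X *v (\<Sum>i=1..k. D i)) \<ge> kappa * (\<Sum>i=1..k. norm (D i))"
    and gamma: "gamma > 0"
    and kg: "kappa^2 > gamma"
  shows "(\<Sum>i=1..k. norm (thetahat i - thetas i)) \<le> 2 * noise_design X w k R thetas gamma"
proof -
  define D where "D i = thetahat i - thetas i" for i
  have cone: "\<forall>i\<in>{1..k}. D i \<in> error_cone (R i) (thetas i)"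
    using feas unfolding D_def by (simp add: diff_in_error_cone)
  have "(\<Sum>i=1..k. thetahat i) = (\<Sum>i=1..k. thetas i) + (\<Sum>i=1..k. D i)"
    unfolding D_def by (simp add: sum_subtractf)
  then have "(norm (w - X *v (\<Sum>i=1..k. D i)))\<^sup>2 \<le> (norm w)\<^sup>2"
    using opt[rule_format, of thetas] y by (simp add: matrix_vector_right_distrib)
  then have basic: "(norm (X *v (\<Sum>i=1..k. D i)))\<^sup>2 \<le> 2 * (w \<bullet> (X *v (\<Sum>i=1..k. D i)))"
    by (rule basic_inequality)
  have "(\<Sum>i=1..k. norm (D i)) / 2 \<le> Inf (noise_design_scales X w k R thetas gamma)"
    using noise_design_scales_nonempty[OF gamma]
  proof (rule cInf_greatest)
    fix s assume "s \<in> noise_design_scales X w k R thetas gamma"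
    from sum_norm_le_twice_scale[OF cone basic RE[rule_format, OF cone[rule_format]] kappa kg this]
    show "(\<Sum>i=1..k. norm (D i)) / 2 \<le> s" by simp
  qed
  then show ?thesis unfolding D_def noise_design_eq_Inf_scales by simp
qed

end
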